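(* Let $d\ge2$, let $f$ be a contractive function on pairs of $d$-dimensional states which is, in addition, continuous. Let $(\Lambda_t)_{t\ge0}$ be any family of CPTP maps with $\Lambda_0=\mathrm{id}$, let $\rho,\sigma$ be states, and let $0=t_0<t_1<t_2<\dots$ be time steps such that the sequence $f_i:=f(\Lambda_{t_i}[\rho],\Lambda_{t_i}[\sigma])$ is non-increasing in $i$. Then there exist parameters $a_i\in[0,1]$ such that, with the CPTP (depolarizing) maps $W_{t_{i+1},t_i}[X]=a_i^{\,t_{i+1}-t_i}X+(1-a_i^{\,t_{i+1}-t_i})\,\mathrm{Tr}(X)\frac{\mathbb 1_d}{d}$ and the states $\mu_0=\rho$, $\tau_0=\sigma$, $\mu_{i+1}=W_{t_{i+1},t_i}[\mu_i]$, $\tau_{i+1}=W_{t_{i+1},t_i}[\tau_i]$, one has $f(\mu_i,\tau_i)=f_i$ for all $i$. In other words, any non-increasing profile of a contractive function can be reproduced by a CP-divisible (Markovian) evolution.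
   Context: A function $f(\rho,\sigma)$ is contractive if $f(\Lambda[\rho],\Lambda[\sigma])\le f(\rho,\sigma)$ for every CPTP map $\Lambda$ and all states $\rho,\sigma$. *)

theory Defs
  imports Complex_Main "Jordan_Normal_Form.Matrix"
begin

(* Operators on d x d complex matrices are modelled as functions complex mat => complex mat;
   only their values on carrier_mat d d matter. *)

definition mtrace :: "complex mat \<Rightarrow> complex" where
  "mtrace A = (\<Sum>i<dim_row A. A $$ (i, i))"

definition psd :: "nat \<Rightarrow> complex mat \<Rightarrow> bool" where
  "psd n A \<longleftrightarrow> A \<in> carrier_mat n n \<and>
     (\<forall>v :: nat \<Rightarrow> complex.
        let q = (\<Sum>i<n. \<Sum>j<n. cnj (v i) * A $$ (i, j) * v j) in Im q = 0 \<and> Re q \<ge> 0)"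

definition is_state :: "nat \<Rightarrow> complex mat \<Rightarrow> bool" where
  "is_state d \<rho> \<longleftrightarrow> psd d \<rho> \<and> mtrace \<rho> = 1"

definition lin_map :: "nat \<Rightarrow> (complex mat \<Rightarrow> complex mat) \<Rightarrow> bool" where
  "lin_map d L \<longleftrightarrow>
     (\<forall>X \<in> carrier_mat d d. L X \<in> carrier_mat d d) \<and>
     (\<forall>X \<in> carrier_mat d d. \<forall>Y \<in> carrier_mat d d. L (X + Y) = L X + L Y) \<and>
     (\<forall>c. \<forall>X \<in> carrier_mat d d. L (c \<cdot>\<^sub>m X) = c \<cdot>\<^sub>m L X)"

(* (id_k \<otimes> L) applied to a (d*k) x (d*k) matrix, viewed as a k x k array of d x d blocks *)
definition block_mat :: "nat \<Rightarrow> complex mat \<Rightarrow> nat \<Rightarrow> nat \<Rightarrow> complex mat" where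
  "block_mat d X a b = mat d d (\<lambda>(i, j). X $$ (a * d + i, b * d + j))"

definition ampl :: "nat \<Rightarrow> nat \<Rightarrow> (complex mat \<Rightarrow> complex mat) \<Rightarrow> complex mat \<Rightarrow> complex mat" where
  "ampl d k L X = mat (k * d) (k * d)
      (\<lambda>(p, q). L (block_mat d X (p div d) (q div d)) $$ (p mod d, q mod d))"

definition completely_positive :: "nat \<Rightarrow> (complex mat \<Rightarrow> complex mat) \<Rightarrow> bool" where
  "completely_positive d L \<longleftrightarrow>
     (\<forall>k. \<forall>X. psd (k * d) X \<longrightarrow> psd (k * d) (ampl d k L X))"

definition trace_preserving :: "nat \<Rightarrow> (complex mat \<Rightarrow> complex mat) \<Rightarrow> bool" where
  "trace_preserving d L \<longleftrightarrow> (\<forall>X \<in> carrier_mat d d. mtrace (L X) = mtrace X)"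

definition CPTP :: "nat \<Rightarrow> (complex mat \<Rightarrow> complex mat) \<Rightarrow> bool" where
  "CPTP d L \<longleftrightarrow> lin_map d L \<and> completely_positive d L \<and> trace_preserving d L"

definition contractive :: "nat \<Rightarrow> (complex mat \<Rightarrow> complex mat \<Rightarrow> real) \<Rightarrow> bool" where
  "contractive d f \<longleftrightarrow>
     (\<forall>L \<rho> \<sigma>. CPTP d L \<longrightarrow> is_state d \<rho> \<longrightarrow> is_state d \<sigma> \<longrightarrow> f (L \<rho>) (L \<sigma>) \<le> f \<rho> \<sigma>)"

(* entrywise l1 distance; all norms on d x d matrices are equivalent *)
definition mdist :: "nat \<Rightarrow> complex mat \<Rightarrow> complex mat \<Rightarrow> real" where
  "mdist d X Y = (\<Sum>i<d. \<Sum>j<d. cmod (X $$ (i, j) - Y $$ (i, j)))"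

definition continuous_on_states :: "nat \<Rightarrow> (complex mat \<Rightarrow> complex mat \<Rightarrow> real) \<Rightarrow> bool" where
  "continuous_on_states d f \<longleftrightarrow>
     (\<forall>\<rho> \<sigma>. is_state d \<rho> \<longrightarrow> is_state d \<sigma> \<longrightarrow>
        (\<forall>e > 0. \<exists>\<delta> > 0. \<forall>\<rho>' \<sigma>'. is_state d \<rho>' \<longrightarrow> is_state d \<sigma>' \<longrightarrow>
            mdist d \<rho>' \<rho> < \<delta> \<longrightarrow> mdist d \<sigma>' \<sigma> < \<delta> \<longrightarrow> \<bar>f \<rho>' \<sigma>' - f \<rho> \<sigma>\<bar> < e))"

definition depol :: "nat \<Rightarrow> real \<Rightarrow> real \<Rightarrow> complex mat \<Rightarrow> complex mat" where
  "depol d a s X = complex_of_real (a powr s) \<cdot>\<^sub>m X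
      + (complex_of_real (1 - a powr s) * mtrace X / of_nat d) \<cdot>\<^sub>m (1\<^sub>m d)"

fun depol_evol :: "nat \<Rightarrow> (nat \<Rightarrow> real) \<Rightarrow> (nat \<Rightarrow> real) \<Rightarrow> complex mat \<Rightarrow> nat \<Rightarrow> complex mat" where
  "depol_evol d a t X0 0 = X0"
| "depol_evol d a t X0 (Suc i) = depol d (a i) (t (Suc i) - t i) (depol_evol d a t X0 i)"

end

theory Submission
  imports Defs "HOL-Analysis.Elementary_Metric_Spaces"
begin

text \<open>The completely depolarizing channel \<open>X \<mapsto> Tr(X) \<one>/d\<close> is CPTP and sends every pair of
states to the pair of maximally mixed states, so by contractivity \<open>f(\<one>/d, \<one>/d)\<close> is a lower
bound for every \<open>f\<^sub>i\<close>. A depolarizing step with parameter \<open>a\<close> interpolates continuously between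
that channel (\<open>a = 0\<close>) and the identity (\<open>a = 1\<close>), so by the intermediate value theorem some
\<open>a\<^sub>i \<in> [0,1]\<close> lowers the value \<open>f\<^sub>i\<close> of the current pair exactly to \<open>f\<^sub>i\<^sub>+\<^sub>1\<close>; choosing the
\<open>a\<^sub>i\<close> one after another yields the evolution.\<close>

definition quad_form :: "nat \<Rightarrow> complex mat \<Rightarrow> (nat \<Rightarrow> complex) \<Rightarrow> complex" where
  "quad_form n A v = (\<Sum>i<n. \<Sum>j<n. cnj (v i) * A $$ (i, j) * v j)"

lemma psd_iff_quad_form:
  "psd n A \<longleftrightarrow> A \<in> carrier_mat n n \<and> (\<forall>v. Im (quad_form n A v) = 0 \<and> Re (quad_form n A v) \<ge> 0)"
  unfolding psd_def quad_form_def Let_def by simp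

lemma quad_form_add:
  "A \<in> carrier_mat n n \<Longrightarrow> B \<in> carrier_mat n n \<Longrightarrow> quad_form n (A + B) v = quad_form n A v + quad_form n B v"
  unfolding quad_form_def by (simp add: sum.distrib[symmetric] algebra_simps)

lemma quad_form_smult: "A \<in> carrier_mat n n \<Longrightarrow> quad_form n (c \<cdot>\<^sub>m A) v = c * quad_form n A v"
  unfolding quad_form_def by (simp add: sum_distrib_left algebra_simps)

lemma quad_form_one_mat: "quad_form n (1\<^sub>m n) v = of_real (\<Sum>i<n. (cmod (v i))\<^sup>2)"
proof -
  have "quad_form n (1\<^sub>m n) v = (\<Sum>i<n. cnj (v i) * v i)"
    unfolding quad_form_def by (simp add: if_distrib[of "\<lambda>x. _ * x * _"] cong: if_cong)
  also have "\<dots> = (\<Sum>i<n. of_real ((cmod (v i))\<^sup>2))"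
    by (rule sum.cong) (auto simp: complex_norm_square[symmetric] mult.commute)
  finally show ?thesis by simp
qed

lemma mtrace_add: "A \<in> carrier_mat n n \<Longrightarrow> B \<in> carrier_mat n n \<Longrightarrow> mtrace (A + B) = mtrace A + mtrace B"
  unfolding mtrace_def by (simp add: sum.distrib)

lemma mtrace_smult: "A \<in> carrier_mat n n \<Longrightarrow> mtrace (c \<cdot>\<^sub>m A) = c * mtrace A"
  unfolding mtrace_def by (simp add: sum_distrib_left)

lemma mtrace_one_mat: "mtrace (1\<^sub>m n) = of_nat n"
  unfolding mtrace_def by simp

lemma is_state_carrier: "is_state d X \<Longrightarrow> X \<in> carrier_mat d d"
  unfolding is_state_def psd_def by auto

definition completely_depol :: "nat \<Rightarrow> complex mat \<Rightarrow> complex mat" where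
  "completely_depol d X = (mtrace X / of_nat d) \<cdot>\<^sub>m 1\<^sub>m d"

lemma sum_lessThan_mult_blocks:
  "(\<Sum>p<k * d. g p) = (\<Sum>a<k. \<Sum>m<d. g (a * d + m :: nat))"
proof -
  have "(\<Sum>p<k * d. g p) = (\<Sum>a<k. \<Sum>p\<in>{a * d..<a * d + d}. g p)"
    using sum.nat_group[of g d k] by simp
  also have "\<dots> = (\<Sum>a<k. \<Sum>m<d. g (a * d + m))"
    using sum.shift_bounds_nat_ivl[of g 0 "_ * d" d] by (simp add: lessThan_atLeast0 add.commute)
  finally show ?thesis .
qed

lemma quad_form_blocks:
  "quad_form (k * d) A v =
     (\<Sum>a<k. \<Sum>m<d. \<Sum>b<k. \<Sum>n<d. cnj (v (a * d + m)) * A $$ (a * d + m, b * d + n) * v (b * d + n))"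
  unfolding quad_form_def sum_lessThan_mult_blocks ..

text \<open>\<open>move_slot d m l v\<close> moves slot \<open>m\<close> of every length-\<open>d\<close> block of \<open>v\<close> to slot \<open>l\<close>; the
quadratic form of the amplified completely depolarizing channel is an average of quadratic forms
of \<open>X\<close> at these vectors, which gives complete positivity.\<close>

definition move_slot :: "nat \<Rightarrow> nat \<Rightarrow> nat \<Rightarrow> (nat \<Rightarrow> complex) \<Rightarrow> nat \<Rightarrow> complex" where
  "move_slot d m l v j = (if j mod d = l then v (j div d * d + m) else 0)"

lemma move_slot_block: "n < d \<Longrightarrow> move_slot d m l v (b * d + n) = (if n = l then v (b * d + m) else 0)"
  by (simp add: move_slot_def)

lemma quad_form_move_slot:
  assumes "l < d"
  shows "quad_form (k * d) X (move_slot d m l v) =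
           (\<Sum>a<k. \<Sum>b<k. cnj (v (a * d + m)) * X $$ (a * d + l, b * d + l) * v (b * d + m))"
  (is "_ = (\<Sum>a<k. \<Sum>b<k. ?T a b)")
proof -
  have "quad_form (k * d) X (move_slot d m l v) =
      (\<Sum>a<k. \<Sum>m'<d. \<Sum>b<k. \<Sum>n<d. if m' = l then if n = l then ?T a b else 0 else 0)"
    unfolding quad_form_blocks by (intro sum.cong refl) (auto simp: move_slot_block)
  also have "\<dots> = (\<Sum>a<k. \<Sum>m'<d. if m' = l then \<Sum>b<k. \<Sum>n<d. if n = l then ?T a b else 0 else 0)"
    by (intro sum.cong refl) auto
  also have "\<dots> = (\<Sum>a<k. \<Sum>b<k. ?T a b)"
    using assms by simp
  finally show ?thesis .
qed

lemma block_index_less: "a < k \<Longrightarrow> m < d \<Longrightarrow> a * d + m < k * (d :: nat)"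
  by (metis add_less_cancel_left mult_Suc le_simps(3) mult_le_mono1 order_less_le_trans add.commute)

lemma ampl_completely_depol_block:
  assumes "a < k" "b < k" "m < d" "n < d"
  shows "ampl d k (completely_depol d) X $$ (a * d + m, b * d + n) =
           (if m = n then (\<Sum>l<d. X $$ (a * d + l, b * d + l)) / of_nat d else 0)"
  using assms block_index_less[of a k m d] block_index_less[of b k n d]
  by (simp add: ampl_def completely_depol_def block_mat_def mtrace_def)

lemma quad_form_ampl_completely_depol:
  "quad_form (k * d) (ampl d k (completely_depol d) X) v =
     (\<Sum>m<d. \<Sum>l<d. quad_form (k * d) X (move_slot d m l v)) / of_nat d"
proof -
  define T where "T a b m l = cnj (v (a * d + m)) * X $$ (a * d + l, b * d + l) * v (b * d + m)" for a b m l
  have "quad_form (k * d) (ampl d k (completely_depol d) X) v =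
      (\<Sum>a<k. \<Sum>m<d. \<Sum>b<k. \<Sum>n<d. cnj (v (a * d + m)) *
         (if m = n then (\<Sum>l<d. X $$ (a * d + l, b * d + l)) / of_nat d else 0) * v (b * d + n))"
    unfolding quad_form_blocks by (intro sum.cong refl) (simp add: ampl_completely_depol_block)
  also have "\<dots> = (\<Sum>a<k. \<Sum>m<d. \<Sum>b<k. \<Sum>l<d. T a b m l) / of_nat d"
    by (simp add: T_def sum_divide_distrib sum_distrib_left sum_distrib_right if_distrib[of "\<lambda>z. z * _"]
        if_distrib[of "(*) _"] mult_ac cong: if_cong)
  also have "\<dots> = (\<Sum>m<d. \<Sum>a<k. \<Sum>l<d. \<Sum>b<k. T a b m l) / of_nat d"
    by (subst sum.swap) (simp add: sum.swap[of _ "{..<k}" "{..<d}"])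
  also have "\<dots> = (\<Sum>m<d. \<Sum>l<d. \<Sum>a<k. \<Sum>b<k. T a b m l) / of_nat d"
    by (subst (2) sum.swap) simp
  finally show ?thesis
    by (simp add: quad_form_move_slot T_def)
qed

lemma completely_positive_completely_depol: "completely_positive d (completely_depol d)"
  unfolding completely_positive_def
proof (intro allI impI)
  fix k X assume "psd (k * d) X"
  then have X: "Im (quad_form (k * d) X w) = 0" "Re (quad_form (k * d) X w) \<ge> 0" for w
    unfolding psd_iff_quad_form by auto
  show "psd (k * d) (ampl d k (completely_depol d) X)"
    unfolding psd_iff_quad_form quad_form_ampl_completely_depol
    by (auto simp: ampl_def X Im_sum Re_sum intro!: sum_nonneg divide_nonneg_nonneg)
qed

lemma CPTP_completely_depol:
  assumes "d > 0"
  shows "CPTP d (completely_depol d)"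
  unfolding CPTP_def lin_map_def trace_preserving_def
proof (intro conjI ballI allI completely_positive_completely_depol)
  fix X Y :: "complex mat" assume X: "X \<in> carrier_mat d d" and Y: "Y \<in> carrier_mat d d"
  show "completely_depol d (X + Y) = completely_depol d X + completely_depol d Y"
    by (rule eq_matI) (auto simp: completely_depol_def mtrace_add[OF X Y] add_divide_distrib)
  show "completely_depol d (c \<cdot>\<^sub>m X) = c \<cdot>\<^sub>m completely_depol d X" for c
    by (rule eq_matI) (auto simp: completely_depol_def mtrace_smult[OF X])
  show "mtrace (completely_depol d X) = mtrace X"
    using assms by (simp add: completely_depol_def mtrace_smult[of "1\<^sub>m d" d] mtrace_one_mat)
qed (simp add: completely_depol_def)

lemma is_state_CPTP_image:
  assumes "CPTP d L" "is_state d X"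
  shows "is_state d (L X)"
proof -
  have X: "X \<in> carrier_mat d d" using assms(2) by (rule is_state_carrier)
  then have LX: "L X \<in> carrier_mat d d" using assms(1) unfolding CPTP_def lin_map_def by auto
  have "block_mat d X 0 0 = X" unfolding block_mat_def using X by (intro eq_matI) auto
  then have "ampl d 1 L X = L X" unfolding ampl_def using LX by (intro eq_matI) auto
  moreover have "psd (1 * d) (ampl d 1 L X)"
    using assms unfolding CPTP_def completely_positive_def is_state_def by (metis mult_1)
  moreover have "mtrace (L X) = 1"
    using assms X unfolding CPTP_def trace_preserving_def is_state_def by auto
  ultimately show ?thesis unfolding is_state_def by simp
qed

definition maximally_mixed :: "nat \<Rightarrow> complex mat" where
  "maximally_mixed d = (1 / of_nat d) \<cdot>\<^sub>m 1\<^sub>m d"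

lemma completely_depol_state: "is_state d X \<Longrightarrow> completely_depol d X = maximally_mixed d"
  unfolding is_state_def completely_depol_def maximally_mixed_def by simp

lemma contractive_maximally_mixed_le:
  assumes "contractive d f" "d > 0" "is_state d x" "is_state d y"
  shows "f (maximally_mixed d) (maximally_mixed d) \<le> f x y"
  using assms CPTP_completely_depol[OF \<open>d > 0\<close>] completely_depol_state[of d]
  unfolding contractive_def by metis

lemma depol_zero: "X \<in> carrier_mat d d \<Longrightarrow> depol d 0 s X = completely_depol d X"
  unfolding depol_def completely_depol_def by (rule eq_matI) auto

lemma depol_one: "X \<in> carrier_mat d d \<Longrightarrow> depol d 1 s X = X"
  unfolding depol_def by (rule eq_matI) auto

lemma is_state_depol:
  assumes "is_state d X" "0 \<le> a" "a \<le> 1" "s \<ge> 0" "d > 0"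
  shows "is_state d (depol d a s X)"
proof -
  have X: "X \<in> carrier_mat d d" and tr: "mtrace X = 1"
    and q: "Im (quad_form d X v) = 0" "Re (quad_form d X v) \<ge> 0" for v
    using assms(1) unfolding is_state_def psd_iff_quad_form by auto
  have p: "0 \<le> a powr s" "a powr s \<le> 1"
    using assms powr_mono2[of s a 1] by auto
  have "quad_form d (depol d a s X) v = of_real (a powr s) * quad_form d X v
      + of_real ((1 - a powr s) / d * (\<Sum>i<d. (cmod (v i))\<^sup>2))" for v
    using X tr unfolding depol_def by (simp add: quad_form_add quad_form_smult quad_form_one_mat)
  then have "psd d (depol d a s X)"
    using X q p unfolding psd_iff_quad_form depol_def by (simp add: sum_nonneg)
  moreover have "mtrace (depol d a s X) = 1"
    using X tr assms(5) unfolding depol_def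
    by (simp add: mtrace_add[of _ d] mtrace_smult[of "1\<^sub>m d" d] mtrace_smult[of X d] mtrace_one_mat)
  ultimately show ?thesis unfolding is_state_def by simp
qed

lemma mdist_nonneg: "mdist d X Y \<ge> 0"
  unfolding mdist_def by (intro sum_nonneg) auto

lemma mdist_depol:
  assumes "X \<in> carrier_mat d d"
  shows "mdist d (depol d a s X) (depol d b s X) = \<bar>a powr s - b powr s\<bar> * mdist d X (completely_depol d X)"
  unfolding mdist_def sum_distrib_left
proof (intro sum.cong refl)
  fix i j assume "i \<in> {..<d}" "j \<in> {..<d}"
  then have "depol d a s X $$ (i, j) - depol d b s X $$ (i, j)
      = of_real (a powr s - b powr s) * (X $$ (i, j) - completely_depol d X $$ (i, j))"
    using assms unfolding depol_def completely_depol_def by (simp add: algebra_simps diff_divide_distrib)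
  then show "cmod (depol d a s X $$ (i, j) - depol d b s X $$ (i, j)) =
      \<bar>a powr s - b powr s\<bar> * cmod (X $$ (i, j) - completely_depol d X $$ (i, j))"
    by (simp add: norm_mult del: of_real_diff flip: of_real_diff)
qed

text \<open>The hypothesis \<open>s > 0\<close> matters: \<open>0 powr 0 = 0\<close> while \<open>a powr 0 = 1\<close> for \<open>a > 0\<close>.\<close>

lemma continuous_on_depol_pair:
  assumes f: "continuous_on_states d f" and "d > 0" "s > 0" and x: "is_state d x" and y: "is_state d y"
  shows "continuous_on {0..1} (\<lambda>a. f (depol d a s x) (depol d a s y))"
  unfolding continuous_on_iff
proof (intro ballI allI impI)
  fix a0 e :: real assume a0: "a0 \<in> {0..1}" and "e > 0"
  let ?x0 = "depol d a0 s x" and ?y0 = "depol d a0 s y"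
  have "is_state d ?x0" "is_state d ?y0"
    using a0 assms by (auto intro!: is_state_depol)
  moreover have "\<forall>e>0. \<exists>\<delta>>0. \<forall>x' y'. is_state d x' \<longrightarrow> is_state d y' \<longrightarrow>
      mdist d x' ?x0 < \<delta> \<longrightarrow> mdist d y' ?y0 < \<delta> \<longrightarrow> \<bar>f x' y' - f ?x0 ?y0\<bar> < e"
    if "is_state d ?x0" "is_state d ?y0"
    using f that unfolding continuous_on_states_def by blast
  ultimately obtain \<delta> where "\<delta> > 0" and \<delta>: "\<And>x' y'. is_state d x' \<Longrightarrow> is_state d y' \<Longrightarrow>
      mdist d x' ?x0 < \<delta> \<Longrightarrow> mdist d y' ?y0 < \<delta> \<Longrightarrow> \<bar>f x' y' - f ?x0 ?y0\<bar> < e"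
    using \<open>e > 0\<close> by blast
  define K where "K = mdist d x (completely_depol d x) + mdist d y (completely_depol d y) + 1"
  have K: "mdist d x (completely_depol d x) \<le> K" "mdist d y (completely_depol d y) \<le> K" "K > 0"
    unfolding K_def using mdist_nonneg[of d x "completely_depol d x"] mdist_nonneg[of d y "completely_depol d y"]
    by simp_all
  have "continuous_on {0..1} (\<lambda>a::real. a powr s)"
    using \<open>s > 0\<close> by (intro continuous_on_powr' continuous_on_id continuous_on_const) auto
  moreover have "\<delta> / K > 0" using \<open>\<delta> > 0\<close> K by simp
  ultimately have "\<exists>\<eta>>0. \<forall>a\<in>{0..1}. dist a a0 < \<eta> \<longrightarrow> dist (a powr s) (a0 powr s) < \<delta> / K"
    using a0 unfolding continuous_on_iff by blast
  then obtain \<eta> where "\<eta> > 0" and \<eta>: "\<And>a. a \<in> {0..1} \<Longrightarrow> dist a a0 < \<eta> \<Longrightarrow>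
      \<bar>a powr s - a0 powr s\<bar> < \<delta> / K"
    unfolding dist_real_def by blast
  show "\<exists>\<eta>>0. \<forall>a\<in>{0..1}. dist a a0 < \<eta> \<longrightarrow> dist (f (depol d a s x) (depol d a s y)) (f ?x0 ?y0) < e"
  proof (intro exI conjI ballI impI)
    fix a assume a: "a \<in> {0..1}" "dist a a0 < \<eta>"
    then have small: "\<bar>a powr s - a0 powr s\<bar> * K < \<delta>"
      using \<eta> K by (simp add: pos_less_divide_eq)
    have "mdist d (depol d a s x) ?x0 \<le> \<bar>a powr s - a0 powr s\<bar> * K"
      "mdist d (depol d a s y) ?y0 \<le> \<bar>a powr s - a0 powr s\<bar> * K"
      using K by (simp_all add: mdist_depol is_state_carrier x y mult_left_mono)
    moreover have "is_state d (depol d a s x)" "is_state d (depol d a s y)"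
      using a assms by (auto intro!: is_state_depol)
    ultimately show "dist (f (depol d a s x) (depol d a s y)) (f ?x0 ?y0) < e"
      using \<delta> small by (simp add: dist_real_def)
  qed (fact \<open>\<eta> > 0\<close>)
qed

lemma depol_pair_attains:
  assumes "continuous_on_states d f" "d > 0" "s > 0" "is_state d x" "is_state d y"
    and "f (maximally_mixed d) (maximally_mixed d) \<le> v" "v \<le> f x y"
  shows "\<exists>a. 0 \<le> a \<and> a \<le> 1 \<and> f (depol d a s x) (depol d a s y) = v"
proof (rule IVT')
  show "f (depol d 0 s x) (depol d 0 s y) \<le> v" "v \<le> f (depol d 1 s x) (depol d 1 s y)"
    using assms by (simp_all add: depol_zero depol_one is_state_carrier completely_depol_state)
  show "continuous_on {0..1} (\<lambda>a. f (depol d a s x) (depol d a s y))"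
    using assms(1-5) by (rule continuous_on_depol_pair)
qed simp

lemma depol_evol_realises_profile:
  assumes f: "continuous_on_states d f" and "d > 0" "strict_mono t"
    and \<rho>: "is_state d \<rho>" and \<sigma>: "is_state d \<sigma>" and "f \<rho> \<sigma> = F 0"
    and decr: "\<And>i. F (Suc i) \<le> F i"
    and lower: "\<And>i. f (maximally_mixed d) (maximally_mixed d) \<le> F i"
  shows "\<exists>a. (\<forall>i. 0 \<le> a i \<and> a i \<le> 1) \<and>
           (\<forall>i. f (depol_evol d a t \<rho> i) (depol_evol d a t \<sigma> i) = F i)"
proof -
  define step where "step i a p =
      (depol d a (t (Suc i) - t i) (fst p), depol d a (t (Suc i) - t i) (snd p))" for i a p
  define good where "good i p \<longleftrightarrow> is_state d (fst p) \<and> is_state d (snd p) \<and>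
      f (fst p) (snd p) = F i \<and> (i = 0 \<longrightarrow> p = (\<rho>, \<sigma>))" for i p
  have "\<exists>S. \<forall>i. good i (S i) \<and> (\<exists>a. 0 \<le> a \<and> a \<le> 1 \<and> S (Suc i) = step i a (S i))"
  proof (rule dependent_nat_choice)
    show "\<exists>p. good 0 p" using \<rho> \<sigma> \<open>f \<rho> \<sigma> = F 0\<close> unfolding good_def by auto
  next
    fix p i assume p: "good i p"
    have "t i < t (Suc i)" using \<open>strict_mono t\<close> by (simp add: strict_mono_def)
    then obtain a where a: "0 \<le> a" "a \<le> 1"
      and "f (fst (step i a p)) (snd (step i a p)) = F (Suc i)"
      using depol_pair_attains[OF f \<open>d > 0\<close>, of "t (Suc i) - t i" "fst p" "snd p" "F (Suc i)"]
        p lower decr unfolding good_def step_def by fastforce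
    then have "good (Suc i) (step i a p)"
      using p \<open>d > 0\<close> \<open>t i < t (Suc i)\<close> unfolding good_def step_def by (auto intro: is_state_depol)
    with a show "\<exists>q. good (Suc i) q \<and> (\<exists>a. 0 \<le> a \<and> a \<le> 1 \<and> q = step i a p)" by blast
  qed
  then obtain S where good: "\<And>i. good i (S i)"
    and "\<And>i. \<exists>a. 0 \<le> a \<and> a \<le> 1 \<and> S (Suc i) = step i a (S i)" by blast
  then obtain a where a: "\<And>i. 0 \<le> a i \<and> a i \<le> 1 \<and> S (Suc i) = step i (a i) (S i)" by metis
  have "S i = (depol_evol d a t \<rho> i, depol_evol d a t \<sigma> i)" for i
    using good[of 0] a unfolding good_def step_def by (induction i) auto
  with good a show ?thesis unfolding good_def by auto
qed

theorem mainTheorem8: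
  fixes d :: nat
    and f :: "complex mat \<Rightarrow> complex mat \<Rightarrow> real"
    and \<Lambda> :: "real \<Rightarrow> complex mat \<Rightarrow> complex mat"
    and \<rho> \<sigma> :: "complex mat"
    and t :: "nat \<Rightarrow> real"
  assumes "d \<ge> 2"
    and "contractive d f"
    and "continuous_on_states d f"
    and "\<forall>s \<ge> 0. CPTP d (\<Lambda> s)"
    and "\<forall>X \<in> carrier_mat d d. \<Lambda> 0 X = X"
    and "is_state d \<rho>" and "is_state d \<sigma>"
    and "t 0 = 0" and "strict_mono t"
    and "\<forall>i. f (\<Lambda> (t (Suc i)) \<rho>) (\<Lambda> (t (Suc i)) \<sigma>) \<le> f (\<Lambda> (t i) \<rho>) (\<Lambda> (t i) \<sigma>)"
  shows "\<exists>a :: nat \<Rightarrow> real. (\<forall>i. 0 \<le> a i \<and> a i \<le> 1) \<and>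
           (\<forall>i. f (depol_evol d a t \<rho> i) (depol_evol d a t \<sigma> i) = f (\<Lambda> (t i) \<rho>) (\<Lambda> (t i) \<sigma>))"
proof (rule depol_evol_realises_profile)
  have "d > 0" using \<open>d \<ge> 2\<close> by simp
  have "t i \<ge> 0" for i
    using strict_mono_less_eq[OF \<open>strict_mono t\<close>, of 0 i] \<open>t 0 = 0\<close> by simp
  then have "is_state d (\<Lambda> (t i) \<rho>)" "is_state d (\<Lambda> (t i) \<sigma>)" for i
    using assms(4,6,7) by (auto intro: is_state_CPTP_image)
  then show "f (maximally_mixed d) (maximally_mixed d) \<le> f (\<Lambda> (t i) \<rho>) (\<Lambda> (t i) \<sigma>)" for i
    using contractive_maximally_mixed_le[OF \<open>contractive d f\<close> \<open>d > 0\<close>] by blast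
  show "f \<rho> \<sigma> = f (\<Lambda> (t 0) \<rho>) (\<Lambda> (t 0) \<sigma>)"
    using assms(5-8) by (simp add: is_state_carrier)
qed (use assms in auto)

end
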